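(* Let $n\ge1$ and for $J,K\subseteq[n-1]$ set $c(J,K)=\#\{u\in\mathfrak{S}_n:\mathrm{Des}(u)\subseteq J,\ \mathrm{Des}(u^{-1})\supseteq K\}$. Then for all $J,R\subseteq[n-1]$, $$c\big(J,(\widetilde{R})^{c}\big)=c\big(R,(\widetilde{J})^{c}\big).$$ Moreover, with $\Phi\colon QSym^*\to QSym$ as below and $S$ the antipode, $S\Phi(M_J^* )=\Phi S^*(M_J^* )=(-1)^n\sum_{R\subseteq[n-1]}c(J,(\widetilde R)^c)\,M_R$.
   Context: $\mathrm{Des}(u)=\{p\in[n-1]:u_p>u_{p+1}\}$ for $u\in\mathfrak{S}_n$ in one-line notation. For $J\subseteq[n-1]$: $J^c=[n-1]\setminus J$ and $\widetilde{J}=\{i\in[n-1]:n-i\in J\}$. $QSym$ is the Hopf algebra of quasi-symmetric functions with monomial basis $M_J$ ($J\subseteq[n-1]$) and $QSym^*$ its graded dual with dual basis $M_J^*$; $S^*$ is the antipode of $QSym^*$. $\Phi=\mathcal{D}\circ\Theta\circ\mathcal{D}^*$, where $\mathcal{D}\colon\mathfrak{S}Sym\to QSym$, $\mathcal{F}_u\mapsto F_{\mathrm{Des}(u)}$ (with $F_J=\sum_{K\supseteq J}M_K$), $\mathcal{D}^*$ is its dual, and $\Theta\colon(\mathfrak{S}Sym)^*\to\mathfrak{S}Sym$ is $\mathcal{F}^*_u\mapsto\mathcal{F}_{u^{-1}}$, for the Malvenuto–Reutenauer Hopf algebra $\mathfrak{S}Sym$ with fundamental basis $\mathcal{F}_u$.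 *)

theory Defs
  imports "HOL-Combinatorics.Permutations"
begin

definition perms :: "nat \<Rightarrow> (nat \<Rightarrow> nat) set" where
  "perms n = {u. u permutes {1..n}}"

definition Des :: "nat \<Rightarrow> (nat \<Rightarrow> nat) \<Rightarrow> nat set" where
  "Des n u = {p \<in> {1..n-1}. u (Suc p) < u p}"

definition setc :: "nat \<Rightarrow> nat set \<Rightarrow> nat set" where
  "setc n J = {1..n-1} - J"

definition tildeS :: "nat \<Rightarrow> nat set \<Rightarrow> nat set" where
  "tildeS n J = {i \<in> {1..n-1}. n - i \<in> J}"

definition cnt :: "nat \<Rightarrow> nat set \<Rightarrow> nat set \<Rightarrow> nat" where
  "cnt n J K = card {u \<in> perms n. Des n u \<subseteq> J \<and> K \<subseteq> Des n (inv u)}"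

(* quasi-shuffle (stuffle) of compositions: M_a * M_b = sum over qsh a b (with multiplicity) *)
fun qsh :: "nat list \<Rightarrow> nat list \<Rightarrow> nat list list" where
  "qsh [] b = [b]"
| "qsh a [] = [a]"
| "qsh (x # a) (y # b) =
     map ((#) x) (qsh a (y # b)) @ map ((#) y) (qsh (x # a) b) @ map ((#) (x + y)) (qsh a b)"

(* elements of QSym as formal integer combinations (coefficient, composition) of the M_alpha *)
type_synonym qexpr = "(int \<times> nat list) list"

definition qmult :: "qexpr \<Rightarrow> qexpr \<Rightarrow> qexpr" where
  "qmult xs ys = concat (map (\<lambda>(a, \<alpha>). concat (map (\<lambda>(b, \<beta>). map (\<lambda>\<gamma>. (a * b, \<gamma>)) (qsh \<alpha> \<beta>)) ys)) xs)"

definition qcoeff :: "qexpr \<Rightarrow> nat list \<Rightarrow> int" where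
  "qcoeff xs \<gamma> = sum_list (map fst (filter (\<lambda>p. snd p = \<gamma>) xs))"

(* Antipode via its defining recursion  m (S \<otimes> id) \<Delta> (M_alpha) = 0 for alpha nonempty,
   with deconcatenation coproduct  \<Delta> M_alpha = sum_i M_(alpha_1..alpha_i) \<otimes> M_(alpha_(i+1)..).
   The first argument is fuel. *)
primrec antip :: "nat \<Rightarrow> nat list \<Rightarrow> qexpr" where
  "antip 0 \<alpha> = [(1, [])]"
| "antip (Suc k) \<alpha> =
     (if \<alpha> = [] then [(1, [])]
      else concat (map (\<lambda>i. map (\<lambda>(a, \<gamma>). (- a, \<gamma>)) (qmult (antip k (take i \<alpha>)) [(1, drop i \<alpha>)]))
                       [0..<length \<alpha>]))"

definition antipode :: "nat list \<Rightarrow> qexpr" where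
  "antipode \<alpha> = antip (length \<alpha>) \<alpha>"

(* J = {j1 < ... < jk} \<subseteq> [n-1]  \<mapsto>  composition (j1, j2-j1, ..., n-jk) *)
definition comp :: "nat \<Rightarrow> nat set \<Rightarrow> nat list" where
  "comp n J = (let ps = sorted_list_of_set J in map2 (\<lambda>a b. a - b) (ps @ [n]) (0 # ps))"

(* Degree-n elements of QSym are coefficient functions R \<mapsto> coefficient of M_R;
   degree-n elements of QSym^* are coefficient functions J \<mapsto> coefficient of M_J^*;
   degree-n elements of SSym and SSym^* are coefficient functions on perms n. *)

definition Sq :: "nat \<Rightarrow> (nat set \<Rightarrow> int) \<Rightarrow> (nat set \<Rightarrow> int)" where
  "Sq n f = (\<lambda>R. \<Sum>J\<in>Pow {1..n-1}. f J * qcoeff (antipode (comp n J)) (comp n R))"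

(* antipode S^* of QSym^*: the transpose of S *)
definition Sstar :: "nat \<Rightarrow> (nat set \<Rightarrow> int) \<Rightarrow> (nat set \<Rightarrow> int)" where
  "Sstar n g = (\<lambda>K. \<Sum>J\<in>Pow {1..n-1}. g J * qcoeff (antipode (comp n K)) (comp n J))"

(* coefficient of M_K in F_J = sum_{K \<supseteq> J} M_K *)
definition Fcoef :: "nat set \<Rightarrow> nat set \<Rightarrow> int" where
  "Fcoef J K = (if J \<subseteq> K then 1 else 0)"

(* D : SSym \<rightarrow> QSym, F_u \<mapsto> F_Des(u) *)
definition Dmap :: "nat \<Rightarrow> ((nat \<Rightarrow> nat) \<Rightarrow> int) \<Rightarrow> (nat set \<Rightarrow> int)" where
  "Dmap n x = (\<lambda>K. \<Sum>u\<in>perms n. x u * Fcoef (Des n u) K)"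

(* D^* : QSym^* \<rightarrow> SSym^*, dual of D:  <D^*(g), F_u> = <g, D(F_u)> *)
definition Dstar :: "nat \<Rightarrow> (nat set \<Rightarrow> int) \<Rightarrow> ((nat \<Rightarrow> nat) \<Rightarrow> int)" where
  "Dstar n g = (\<lambda>u. \<Sum>J\<in>Pow {1..n-1}. g J * Fcoef (Des n u) J)"

(* Theta : SSym^* \<rightarrow> SSym, F_u^* \<mapsto> F_(u^-1) *)
definition Theta :: "nat \<Rightarrow> ((nat \<Rightarrow> nat) \<Rightarrow> int) \<Rightarrow> ((nat \<Rightarrow> nat) \<Rightarrow> int)" where
  "Theta n z = (\<lambda>v. \<Sum>u\<in>perms n. if inv u = v then z u else 0)"

definition Phi :: "nat \<Rightarrow> (nat set \<Rightarrow> int) \<Rightarrow> (nat set \<Rightarrow> int)" where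
  "Phi n = Dmap n \<circ> Theta n \<circ> Dstar n"

definition Mstar :: "nat set \<Rightarrow> (nat set \<Rightarrow> int)" where
  "Mstar J = (\<lambda>K. if K = J then 1 else 0)"

end

theory Submission
  imports Defs
begin

(*
  The antipode of QSym is S(M_alpha) = (-1)^l(alpha) \<Sum> M_beta, summed over the coarsenings beta of
  the reversed composition; this follows from the recursion defining S, whose alternating sum
  telescopes. In terms of subsets of [n-1] it says S(F_D) = (-1)^n F_E with E = ~(D^c). As
  Phi(M*_J) = \<Sum>_u [Des(u^-1) \<subseteq> J] F_Des(u), applying S gives (-1)^n c(J, (~R)^c) as the
  coefficient of M_R, and Phi(S*(M*_J)) is computed in the same way.

  For the symmetry of c, u \<mapsto> u^-1 w0 is a bijection from the permutations counted by c(J, (~R)^c)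
  to those counted by c(R, J^c), and c(X, (~Y)^c) = c(X, Y^c): a permutation u with Des(u) \<subseteq> X is
  the standardization of the word recording the block of X containing u^-1(a), and permuting the
  letters of that word by a fixed permutation moves the descents prescribed on Y^c to (~Y)^c.
*)

section \<open>The antipode of QSym in the monomial basis\<close>

fun coarsenings :: "nat list \<Rightarrow> nat list list" where
  "coarsenings [] = [[]]"
| "coarsenings (x # q) =
     concat (map (\<lambda>t. map ((#) (sum_list (take t (x # q)))) (coarsenings (drop t (x # q))))
                 [1..<Suc (length (x # q))])"

declare coarsenings.simps(2)[simp del]

text \<open>The compositions, with multiplicity, in \<open>\<Sum>\<^sub>\<beta> M\<^sub>\<beta> \<cdot> M\<^sub>s\<close> over the coarsenings \<open>\<beta>\<close>
  of \<open>q\<close>. The \<open>i\<close>-th term of the recursion for \<open>antipode \<alpha>\<close> is, up to the sign \<open>(-1)\<^sup>i\<close>,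
  this with \<open>q = rev (take i \<alpha>)\<close> and \<open>s = drop i \<alpha>\<close>.\<close>
definition coarsen_qsh :: "nat list \<Rightarrow> nat list \<Rightarrow> nat list list" where
  "coarsen_qsh q s = concat (map (\<lambda>\<beta>. qsh \<beta> s) (coarsenings q))"

lemma qsh_Nil2 [simp]: "qsh a [] = [a]"
  by (cases a) auto

lemma sum_list_concat_map: "(\<Sum>x\<leftarrow>concat xss. f x) = (\<Sum>xs\<leftarrow>xss. \<Sum>x\<leftarrow>xs. f x)"
  by (induction xss) auto

lemma sum_list_indicator_eq_count_list: "(\<Sum>\<beta>\<leftarrow>xs. if \<beta> = y then 1 else 0) = count_list xs y"
  by (induction xs) auto

lemma sum_list_if_const:
  "(\<Sum>x\<leftarrow>xs. if P then f x else 0) = (if P then (\<Sum>x\<leftarrow>xs. f x) else (0::'a::comm_monoid_add))"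
  by (induction xs) auto

lemma count_list_map_Cons:
  "count_list (map ((#) a) xs) (g # \<gamma>) = (if a = g then count_list xs \<gamma> else 0)"
  "count_list (map ((#) a) xs) [] = 0"
  by (induction xs) auto

lemma sum_list_upt_Suc: "(\<Sum>t\<leftarrow>[1..<Suc n]. f t) = (\<Sum>t\<in>{1..n}. f t)"
  by (simp only: interv_sum_list_conv_sum_set_nat set_upt atLeastLessThanSuc_atLeastAtMost)

lemma count_coarsenings_Nil: "count_list (coarsenings q) [] = (if q = [] then 1 else 0)"
  by (cases q) (simp_all add: coarsenings.simps(2) count_list_concat count_list_map_Cons)

lemma Nil_notin_coarsenings: "q \<noteq> [] \<Longrightarrow> [] \<notin> set (coarsenings q)"
  using count_coarsenings_Nil[of q] count_list_0_iff by fastforce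

lemma sum_list_coarsenings:
  assumes "q \<noteq> []"
  shows "(\<Sum>\<beta>\<leftarrow>coarsenings q. F (hd \<beta>) (tl \<beta>)) =
         (\<Sum>t\<in>{1..length q}. \<Sum>\<beta>\<leftarrow>coarsenings (drop t q). F (sum_list (take t q)) \<beta>)"
proof -
  obtain x q' where q: "q = x # q'"
    using assms by (cases q) auto
  show ?thesis
    unfolding q coarsenings.simps(2) sum_list_concat_map map_map o_def
    by (simp only: sum_list_upt_Suc list.sel)
qed

lemma count_coarsenings_Cons:
  assumes "q \<noteq> []"
  shows "count_list (coarsenings q) (g # \<gamma>) =
    (\<Sum>t\<in>{1..length q}. if sum_list (take t q) = g then count_list (coarsenings (drop t q)) \<gamma> else 0)"
proof -
  obtain x q' where q: "q = x # q'"
    using assms by (cases q) auto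
  show ?thesis
    unfolding q coarsenings.simps(2) count_list_concat map_map o_def count_list_map_Cons
    by (simp only: sum_list_upt_Suc)
qed

lemma count_qsh_Nil: "count_list (qsh a b) [] = (if a = [] \<and> b = [] then 1 else 0)"
  by (cases a; cases b) (simp_all add: count_list_map_Cons)

lemma count_coarsen_qsh: "count_list (coarsen_qsh q s) \<gamma> = (\<Sum>\<beta>\<leftarrow>coarsenings q. count_list (qsh \<beta> s) \<gamma>)"
  unfolding coarsen_qsh_def count_list_concat map_map o_def ..

lemma coarsen_qsh_Nil1 [simp]: "coarsen_qsh [] s = [s]"
  by (simp add: coarsen_qsh_def)

lemma coarsen_qsh_Nil2 [simp]: "coarsen_qsh q [] = coarsenings q"
  by (simp add: coarsen_qsh_def map_idI)

lemma count_coarsen_qsh_Nil: "count_list (coarsen_qsh q s) [] = (if q = [] \<and> s = [] then 1 else 0)"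
proof -
  have "count_list (coarsen_qsh q s) [] = (\<Sum>\<beta>\<leftarrow>coarsenings q. if \<beta> = [] \<and> s = [] then 1 else 0)"
    by (simp add: count_coarsen_qsh count_qsh_Nil)
  also have "\<dots> = (if s = [] then count_list (coarsenings q) [] else 0)"
    by (cases "s = []") (simp_all add: sum_list_indicator_eq_count_list)
  finally show ?thesis
    by (simp add: count_coarsenings_Nil)
qed

lemma count_coarsen_qsh_Cons_Cons:
  assumes "q \<noteq> []"
  shows "count_list (coarsen_qsh q (y # s)) (g # \<gamma>) =
     (\<Sum>t\<in>{1..length q}. if sum_list (take t q) = g then count_list (coarsen_qsh (drop t q) (y # s)) \<gamma> else 0)
   + (\<Sum>t\<in>{0..length q}. if sum_list (take t q) + y = g then count_list (coarsen_qsh (drop t q) s) \<gamma> else 0)"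
proof -
  have "count_list (coarsen_qsh q (y # s)) (g # \<gamma>) = (\<Sum>\<beta>\<leftarrow>coarsenings q.
        (if hd \<beta> = g then count_list (qsh (tl \<beta>) (y # s)) \<gamma> else 0)
      + (if y = g then count_list (qsh \<beta> s) \<gamma> else 0)
      + (if hd \<beta> + y = g then count_list (qsh (tl \<beta>) s) \<gamma> else 0))"
    unfolding count_coarsen_qsh
  proof (intro arg_cong[where f=sum_list] map_cong refl)
    fix \<beta> assume "\<beta> \<in> set (coarsenings q)"
    then have "\<beta> \<noteq> []"
      using Nil_notin_coarsenings[OF assms] by blast
    then obtain b \<beta>' where "\<beta> = b # \<beta>'"
      by (cases \<beta>) auto
    then show "count_list (qsh \<beta> (y # s)) (g # \<gamma>) =
        (if hd \<beta> = g then count_list (qsh (tl \<beta>) (y # s)) \<gamma> else 0)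
      + (if y = g then count_list (qsh \<beta> s) \<gamma> else 0)
      + (if hd \<beta> + y = g then count_list (qsh (tl \<beta>) s) \<gamma> else 0)"
      by (simp add: count_list_map_Cons)
  qed
  also have "\<dots> =
      (\<Sum>t\<in>{1..length q}. if sum_list (take t q) = g then count_list (coarsen_qsh (drop t q) (y # s)) \<gamma> else 0)
    + (if y = g then count_list (coarsen_qsh q s) \<gamma> else 0)
    + (\<Sum>t\<in>{1..length q}. if sum_list (take t q) + y = g then count_list (coarsen_qsh (drop t q) s) \<gamma> else 0)"
    by (simp add: sum_list_addf count_coarsen_qsh sum_list_if_const
          sum_list_coarsenings[OF assms, where F="\<lambda>h \<beta>. if h = g then count_list (qsh \<beta> (y # s)) \<gamma> else 0"]
          sum_list_coarsenings[OF assms, where F="\<lambda>h \<beta>. if h + y = g then count_list (qsh \<beta> s) \<gamma> else 0"]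
          cong: if_cong)
  finally show ?thesis
    by (simp add: sum.atLeast_Suc_atMost)
qed

lemma count_coarsen_qsh_Cons:
  "count_list (coarsen_qsh q s) (g # \<gamma>) =
     (\<Sum>t\<in>{1..length q}. if sum_list (take t q) = g then count_list (coarsen_qsh (drop t q) s) \<gamma> else 0)
   + (if s = [] then 0 else
     (\<Sum>t\<in>{0..length q}. if sum_list (take t q) + hd s = g then count_list (coarsen_qsh (drop t q) (tl s)) \<gamma> else 0))"
proof (cases "q = []")
  case True
  then show ?thesis
    by (cases s) auto
next
  case False
  then show ?thesis
    by (cases s) (simp_all add: count_coarsen_qsh_Cons_Cons count_coarsenings_Cons cong: if_cong)
qed

text \<open>The compositions \<open>g # \<gamma>\<close> in the terms of the recursion for \<open>antipode \<alpha>\<close> whose first part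
  \<open>g\<close> is a block sum \<open>\<alpha>\<^sub>j\<^sub>+\<^sub>1 + \<dots> + \<alpha>\<^sub>m\<close>, for fixed \<open>m\<close>. Only \<open>m = i\<close> and \<open>m = i + 1\<close>
  occur in the \<open>i\<close>-th term, so the alternating sum telescopes.\<close>
definition leading_block_count :: "nat list \<Rightarrow> nat \<Rightarrow> nat list \<Rightarrow> nat \<Rightarrow> int" where
  "leading_block_count \<alpha> g \<gamma> m =
     (\<Sum>j<m. if sum_list (take (m - j) (drop j \<alpha>)) = g
            then int (count_list (coarsen_qsh (rev (take j \<alpha>)) (drop m \<alpha>)) \<gamma>) else 0)"

lemma take_rev_take: "t \<le> i \<Longrightarrow> i \<le> length \<alpha> \<Longrightarrow> take t (rev (take i \<alpha>)) = rev (take t (drop (i - t) \<alpha>))"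
  by (simp add: take_rev drop_take min_def)

lemma drop_rev_take: "t \<le> i \<Longrightarrow> i \<le> length \<alpha> \<Longrightarrow> drop t (rev (take i \<alpha>)) = rev (take (i - t) \<alpha>)"
  by (simp add: drop_rev min_def)

lemma leading_block_count_eq:
  assumes "i \<le> length \<alpha>"
  shows "leading_block_count \<alpha> g \<gamma> i =
    (\<Sum>t\<in>{1..i}. if sum_list (take t (rev (take i \<alpha>))) = g
      then int (count_list (coarsen_qsh (drop t (rev (take i \<alpha>))) (drop i \<alpha>)) \<gamma>) else 0)"
  unfolding leading_block_count_def
  by (rule sum.reindex_bij_witness[where i="\<lambda>t. i - t" and j="\<lambda>j. i - j"])
     (use assms in \<open>auto simp: take_rev_take drop_rev_take\<close>)

lemma leading_block_count_Suc_eq: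
  assumes "i < length \<alpha>"
  shows "leading_block_count \<alpha> g \<gamma> (Suc i) =
    (\<Sum>t\<in>{0..i}. if sum_list (take t (rev (take i \<alpha>))) + \<alpha> ! i = g
      then int (count_list (coarsen_qsh (drop t (rev (take i \<alpha>))) (drop (Suc i) \<alpha>)) \<gamma>) else 0)"
proof -
  have "sum_list (take (i - j) (drop j \<alpha>)) + \<alpha> ! i = sum_list (take (Suc (i - j)) (drop j \<alpha>))"
    if "j \<le> i" for j
    using that assms by (simp add: take_Suc_conv_app_nth)
  then show ?thesis
    unfolding leading_block_count_def
    by (intro sum.reindex_bij_witness[where i="\<lambda>t. i - t" and j="\<lambda>j. i - j"])
       (use assms in \<open>auto simp: take_rev_take drop_rev_take Suc_diff_le\<close>)
qed

lemma count_coarsen_qsh_prefix: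
  assumes i: "i \<le> length \<alpha>"
  shows "int (count_list (coarsen_qsh (rev (take i \<alpha>)) (drop i \<alpha>)) (g # \<gamma>)) =
    leading_block_count \<alpha> g \<gamma> i + (if i < length \<alpha> then leading_block_count \<alpha> g \<gamma> (Suc i) else 0)"
proof (cases "i < length \<alpha>")
  case True
  then have "drop i \<alpha> = \<alpha> ! i # drop (Suc i) \<alpha>"
    by (simp add: Cons_nth_drop_Suc)
  then show ?thesis
    using True i
    by (simp add: count_coarsen_qsh_Cons leading_block_count_eq[OF i] leading_block_count_Suc_eq[OF True]
                  if_distrib cong: if_cong)
next
  case False
  then show ?thesis
    unfolding leading_block_count_eq[OF i] using i
    by (simp add: count_coarsen_qsh_Cons if_distrib del: coarsen_qsh_Nil2 cong: if_cong)
qed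

lemma alternating_sum_telescope:
  fixes H :: "nat \<Rightarrow> 'a::comm_ring_1"
  assumes "H 0 = 0"
  shows "(\<Sum>i\<le>k. (-1)^i * (H i + (if i < k then H (Suc i) else 0))) = 0"
proof -
  have "(\<Sum>i\<le>k. (-1)^i * (H i + (if i < k then H (Suc i) else 0)))
      = (\<Sum>i\<le>k. (-1)^i * H i) + (\<Sum>i\<le>k. if i < k then (-1)^i * H (Suc i) else 0)"
    unfolding sum.distrib[symmetric] by (intro sum.cong) (auto simp: algebra_simps)
  also have "(\<Sum>i\<le>k. if i < k then (-1)^i * H (Suc i) else 0) = (\<Sum>i<k. (-1)^i * H (Suc i))"
    by (rule sum.mono_neutral_cong_right) auto
  also have "(\<Sum>i\<le>k. (-1)^i * H i) + (\<Sum>i<k. (-1)^i * H (Suc i)) = H 0" for k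
    by (induction k) (auto simp: algebra_simps)
  finally show ?thesis
    using assms by simp
qed

lemma alternating_sum_coarsen_qsh:
  assumes "\<alpha> \<noteq> []"
  shows "(\<Sum>i\<le>length \<alpha>. (-1::int)^i * int (count_list (coarsen_qsh (rev (take i \<alpha>)) (drop i \<alpha>)) \<gamma>)) = 0"
proof (cases \<gamma>)
  case Nil
  then show ?thesis
    using assms by (auto simp: count_coarsen_qsh_Nil intro!: sum.neutral)
next
  case (Cons g \<gamma>')
  then show ?thesis
    using alternating_sum_telescope[of "leading_block_count \<alpha> g \<gamma>'" "length \<alpha>"]
    by (simp add: count_coarsen_qsh_prefix leading_block_count_def)
qed

lemma qcoeff_Nil [simp]: "qcoeff [] \<gamma> = 0"
  and qcoeff_Cons [simp]: "qcoeff (x # xs) \<gamma> = (if snd x = \<gamma> then fst x else 0) + qcoeff xs \<gamma>"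
  and qcoeff_append [simp]: "qcoeff (xs @ ys) \<gamma> = qcoeff xs \<gamma> + qcoeff ys \<gamma>"
  by (simp_all add: qcoeff_def)

lemma qcoeff_concat: "qcoeff (concat xss) \<gamma> = (\<Sum>xs\<leftarrow>xss. qcoeff xs \<gamma>)"
  by (induction xss) auto

lemma qcoeff_uminus: "qcoeff (map (\<lambda>(a, \<gamma>). (- a, \<gamma>)) xs) \<gamma> = - qcoeff xs \<gamma>"
  by (induction xs) auto

lemma qcoeff_qmult_monomial:
  "qcoeff (qmult xs [(1, s)]) \<gamma> = (\<Sum>(a, \<beta>)\<leftarrow>xs. a * int (count_list (qsh \<beta> s) \<gamma>))"
proof -
  have "qcoeff (map (\<lambda>\<gamma>. (a, \<gamma>)) l) \<gamma> = a * int (count_list l \<gamma>)" for a l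
    by (induction l) (auto simp: algebra_simps)
  then show ?thesis
    unfolding qmult_def by (induction xs) auto
qed

lemma sum_list_qexpr_eq_sum_qcoeff:
  assumes "finite B" "snd ` set xs \<subseteq> B"
  shows "(\<Sum>(a, \<beta>)\<leftarrow>xs. a * F \<beta>) = (\<Sum>\<beta>\<in>B. qcoeff xs \<beta> * F \<beta>)"
  using assms(2)
proof (induction xs)
  case (Cons x xs)
  obtain a \<beta> where x: "x = (a, \<beta>)"
    by (cases x)
  have "\<beta> \<in> B"
    using Cons.prems x by auto
  have "(\<Sum>\<beta>'\<in>B. qcoeff (x # xs) \<beta>' * F \<beta>') =
      (\<Sum>\<beta>'\<in>B. if \<beta> = \<beta>' then a * F \<beta>' else 0) + (\<Sum>\<beta>'\<in>B. qcoeff xs \<beta>' * F \<beta>')"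
    unfolding x sum.distrib[symmetric] by (intro sum.cong) (auto simp: algebra_simps)
  then show ?case
    using Cons x \<open>\<beta> \<in> B\<close> assms(1) by simp
qed simp

lemma qcoeff_antip:
  "length \<alpha> \<le> k \<Longrightarrow> qcoeff (antip k \<alpha>) \<gamma> = (-1)^length \<alpha> * int (count_list (coarsenings (rev \<alpha>)) \<gamma>)"
proof (induction k arbitrary: \<alpha> \<gamma>)
  case (Suc k)
  show ?case
  proof (cases "\<alpha> = []")
    case False
    define W where "W i = int (count_list (coarsen_qsh (rev (take i \<alpha>)) (drop i \<alpha>)) \<gamma>)" for i
    have summand: "qcoeff (qmult (antip k (take i \<alpha>)) [(1, drop i \<alpha>)]) \<gamma> = (-1)^i * W i"
      if "i < length \<alpha>" for i
    proof -
      define F where "F \<beta> = count_list (qsh \<beta> (drop i \<alpha>)) \<gamma>" for \<beta>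
      define L where "L = coarsenings (rev (take i \<alpha>))"
      define B where "B = snd ` set (antip k (take i \<alpha>)) \<union> set L"
      have "qcoeff (qmult (antip k (take i \<alpha>)) [(1, drop i \<alpha>)]) \<gamma>
          = (\<Sum>\<beta>\<in>B. qcoeff (antip k (take i \<alpha>)) \<beta> * int (F \<beta>))"
        unfolding qcoeff_qmult_monomial F_def
        by (rule sum_list_qexpr_eq_sum_qcoeff) (auto simp: B_def)
      also have "\<dots> = (-1)^i * int (\<Sum>\<beta>\<in>B. count_list L \<beta> * F \<beta>)"
        using Suc.IH[of "take i \<alpha>"] Suc.prems that
        by (simp add: L_def sum_distrib_left algebra_simps)
      also have "(\<Sum>\<beta>\<in>B. count_list L \<beta> * F \<beta>) = (\<Sum>\<beta>\<leftarrow>L. F \<beta>)"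
        by (rule sum_list_map_eq_sum_count2[symmetric]) (auto simp: B_def)
      also have "int (\<Sum>\<beta>\<leftarrow>L. F \<beta>) = W i"
        by (simp add: W_def count_coarsen_qsh F_def L_def)
      finally show ?thesis .
    qed
    have "qcoeff (antip (Suc k) \<alpha>) \<gamma> = - (\<Sum>i<length \<alpha>. (-1)^i * W i)"
      using False
      by (simp add: qcoeff_concat qcoeff_uminus o_def summand sum_negf atLeast0LessThan
                    interv_sum_list_conv_sum_set_nat)
    also have "\<dots> = (-1)^length \<alpha> * W (length \<alpha>)"
      using alternating_sum_coarsen_qsh[OF False, of \<gamma>]
      by (simp add: W_def lessThan_Suc_atMost[symmetric])
    also have "W (length \<alpha>) = int (count_list (coarsenings (rev \<alpha>)) \<gamma>)"
      by (simp add: W_def)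
    finally show ?thesis .
  qed simp
qed simp

theorem qcoeff_antipode:
  "qcoeff (antipode \<alpha>) \<gamma> = (-1)^length \<alpha> * int (count_list (coarsenings (rev \<alpha>)) \<gamma>)"
  unfolding antipode_def by (rule qcoeff_antip) simp

section \<open>Compositions of n and subsets of [n-1]\<close>

definition partial_sums :: "nat list \<Rightarrow> nat set" where
  "partial_sums \<beta> = {sum_list (take i \<beta>) | i. i \<le> length \<beta>}"

definition coarsens :: "nat list \<Rightarrow> nat list \<Rightarrow> bool" where
  "coarsens \<beta> q \<longleftrightarrow> 0 \<notin> set \<beta> \<and> sum_list \<beta> = sum_list q \<and> partial_sums \<beta> \<subseteq> partial_sums q"

lemma sum_list_take_mem_partial_sums: "i \<le> length \<beta> \<Longrightarrow> sum_list (take i \<beta>) \<in> partial_sums \<beta>"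
  unfolding partial_sums_def by blast

lemma partial_sums_Cons: "partial_sums (b # \<beta>) = insert 0 ((+) b ` partial_sums \<beta>)"
proof (intro equalityI subsetI)
  fix x assume "x \<in> partial_sums (b # \<beta>)"
  then obtain i where "i \<le> Suc (length \<beta>)" "x = sum_list (take i (b # \<beta>))"
    by (auto simp: partial_sums_def)
  then show "x \<in> insert 0 ((+) b ` partial_sums \<beta>)"
    by (cases i) (simp_all add: sum_list_take_mem_partial_sums)
next
  fix x assume "x \<in> insert 0 ((+) b ` partial_sums \<beta>)"
  then consider "x = 0" | j where "j \<le> length \<beta>" "x = b + sum_list (take j \<beta>)"
    by (auto simp: partial_sums_def)
  then show "x \<in> partial_sums (b # \<beta>)"
  proof cases
    case 1
    then show ?thesis
      using sum_list_take_mem_partial_sums[of 0 "b # \<beta>"] by simp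
  next
    case 2
    then show ?thesis
      using sum_list_take_mem_partial_sums[of "Suc j" "b # \<beta>"] by simp
  qed
qed

lemma partial_sums_rev: "partial_sums (rev \<beta>) = (\<lambda>x. sum_list \<beta> - x) ` partial_sums \<beta>"
proof -
  have rev_sum: "sum_list (take i (rev \<beta>)) = sum_list \<beta> - sum_list (take (length \<beta> - i) \<beta>)" for i
  proof -
    have "sum_list \<beta> = sum_list (take (length \<beta> - i) \<beta>) + sum_list (drop (length \<beta> - i) \<beta>)"
      by (metis append_take_drop_id sum_list_append)
    then show ?thesis
      by (simp add: take_rev)
  qed
  show ?thesis
  proof (intro equalityI subsetI)
    fix x assume "x \<in> partial_sums (rev \<beta>)"
    then obtain i where "x = sum_list (take i (rev \<beta>))"
      by (auto simp: partial_sums_def)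
    then show "x \<in> (\<lambda>x. sum_list \<beta> - x) ` partial_sums \<beta>"
      using rev_sum sum_list_take_mem_partial_sums[of "length \<beta> - i" \<beta>] by simp
  next
    fix x assume "x \<in> (\<lambda>x. sum_list \<beta> - x) ` partial_sums \<beta>"
    then obtain j where "j \<le> length \<beta>" "x = sum_list \<beta> - sum_list (take j \<beta>)"
      by (auto simp: partial_sums_def)
    then show "x \<in> partial_sums (rev \<beta>)"
      using rev_sum[of "length \<beta> - j"] sum_list_take_mem_partial_sums[of "length \<beta> - j" "rev \<beta>"]
      by simp
  qed
qed

lemma sum_list_pos: "0 \<notin> set xs \<Longrightarrow> xs \<noteq> [] \<Longrightarrow> 0 < sum_list (xs :: nat list)"
  by (cases xs) auto

lemma sum_list_take_strict_mono:
  fixes q :: "nat list"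
  assumes "0 \<notin> set q" "i < j" "j \<le> length q"
  shows "sum_list (take i q) < sum_list (take j q)"
proof -
  have split: "take j q = take i q @ take (j - i) (drop i q)"
    using assms take_add[of i "j - i" q] by simp
  have "take (j - i) (drop i q) \<noteq> []" "0 \<notin> set (take (j - i) (drop i q))"
    using assms by (auto dest: in_set_takeD in_set_dropD)
  then have "0 < sum_list (take (j - i) (drop i q))"
    by (rule sum_list_pos[rotated])
  then show ?thesis
    unfolding split by simp
qed

lemma sum_list_take_inj:
  fixes q :: "nat list"
  assumes "0 \<notin> set q" "i \<le> length q" "j \<le> length q" "sum_list (take i q) = sum_list (take j q)"
  shows "i = j"
  using sum_list_take_strict_mono[OF assms(1), of i j] sum_list_take_strict_mono[OF assms(1), of j i] assms
  by (cases i j rule: linorder_cases) auto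

lemma add_mem_partial_sums_iff:
  assumes "0 \<notin> set q" "t \<le> length q"
  shows "sum_list (take t q) + y \<in> partial_sums q \<longleftrightarrow> y \<in> partial_sums (drop t q)"
proof
  assume "sum_list (take t q) + y \<in> partial_sums q"
  then obtain j where j: "j \<le> length q" "sum_list (take t q) + y = sum_list (take j q)"
    by (auto simp: partial_sums_def)
  then have "t \<le> j"
    using sum_list_take_strict_mono[OF assms(1), of j t] assms(2) by (cases "t \<le> j") auto
  then have "take j q = take t q @ take (j - t) (drop t q)"
    using take_add[of t "j - t" q] by simp
  then have "y = sum_list (take (j - t) (drop t q))"
    using j by simp
  then show "y \<in> partial_sums (drop t q)"
    using sum_list_take_mem_partial_sums[of "j - t" "drop t q"] j by simp
next
  assume "y \<in> partial_sums (drop t q)"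
  then obtain i where i: "i \<le> length (drop t q)" "y = sum_list (take i (drop t q))"
    by (auto simp: partial_sums_def)
  then have "sum_list (take t q) + y = sum_list (take (t + i) q)"
    by (simp add: take_add)
  then show "sum_list (take t q) + y \<in> partial_sums q"
    using sum_list_take_mem_partial_sums[of "t + i" q] i assms(2) by simp
qed

lemma coarsens_Nil_iff: "coarsens \<beta> [] \<longleftrightarrow> \<beta> = []"
proof
  assume "coarsens \<beta> []"
  then show "\<beta> = []"
    by (cases \<beta>) (auto simp: coarsens_def)
qed (simp add: coarsens_def partial_sums_def)

lemma coarsens_Cons_iff:
  assumes q: "0 \<notin> set q" and t: "t \<in> {1..length q}"
  shows "coarsens (sum_list (take t q) # \<beta>) q \<longleftrightarrow> coarsens \<beta> (drop t q)"
proof -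
  define b where "b = sum_list (take t q)"
  have "take t q \<noteq> []" "0 \<notin> set (take t q)"
    using q t by (auto dest: in_set_takeD)
  then have "0 < b"
    unfolding b_def by (rule sum_list_pos[rotated])
  moreover have "sum_list q = b + sum_list (drop t q)"
    unfolding b_def by (metis append_take_drop_id sum_list_append)
  moreover have "(+) b ` partial_sums \<beta> \<subseteq> partial_sums q \<longleftrightarrow> partial_sums \<beta> \<subseteq> partial_sums (drop t q)"
    using add_mem_partial_sums_iff[OF q] t unfolding b_def by auto
  moreover have "0 \<in> partial_sums q"
    using sum_list_take_mem_partial_sums[of 0 q] by simp
  ultimately show ?thesis
    unfolding b_def[symmetric] coarsens_def partial_sums_Cons by auto
qed

lemma coarsens_Cons_first:
  assumes "coarsens (b # \<beta>) q"
  obtains t where "t \<in> {1..length q}" "sum_list (take t q) = b"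
proof -
  have "b \<in> partial_sums (b # \<beta>)"
    using sum_list_take_mem_partial_sums[of 1 "b # \<beta>"] by simp
  then have "b \<in> partial_sums q"
    using assms by (auto simp: coarsens_def)
  then obtain t where "t \<le> length q" "sum_list (take t q) = b"
    by (auto simp: partial_sums_def)
  moreover have "b \<noteq> 0"
    using assms by (auto simp: coarsens_def)
  ultimately show ?thesis
    using that[of t] by (cases t) auto
qed

lemma sum_first_part_indicator:
  assumes q: "0 \<notin> set q"
  shows "(\<Sum>t\<in>{1..length q}. if sum_list (take t q) = b \<and> coarsens (b # \<beta>) q then 1 else 0) =
    (if coarsens (b # \<beta>) q then (1::nat) else 0)"
proof (cases "coarsens (b # \<beta>) q")
  case True
  then obtain t0 where t0: "t0 \<in> {1..length q}" "sum_list (take t0 q) = b"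
    by (rule coarsens_Cons_first)
  have "sum_list (take t q) = b \<longleftrightarrow> t = t0" if "t \<in> {1..length q}" for t
    using sum_list_take_inj[OF q, of t t0] that t0 by auto
  then have "(\<Sum>t\<in>{1..length q}. if sum_list (take t q) = b then 1 else 0)
      = (\<Sum>t\<in>{1..length q}. if t = t0 then 1 else (0::nat))"
    by (intro sum.cong) auto
  then show ?thesis
    using True t0(1) by simp
qed simp

theorem count_coarsenings:
  "0 \<notin> set q \<Longrightarrow> count_list (coarsenings q) \<beta> = (if coarsens \<beta> q then 1 else 0)"
proof (induction q arbitrary: \<beta> rule: coarsenings.induct)
  case 1
  then show ?case
    by (simp add: coarsens_Nil_iff)
next
  case (2 x q')
  define Q where "Q = x # q'"
  have Q: "0 \<notin> set Q" "Q \<noteq> []"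
    using "2.prems" by (auto simp: Q_def)
  have IH: "count_list (coarsenings (drop t Q)) \<beta>' = (if coarsens \<beta>' (drop t Q) then 1 else 0)"
    if "t \<in> {1..length Q}" for t \<beta>'
  proof -
    have "t \<in> set [1..<Suc (length (x # q'))]" "0 \<notin> set (drop t (x # q'))"
      using that Q(1) by (auto simp: Q_def dest: in_set_dropD)
    from "2.IH"[OF this] show ?thesis
      by (simp add: Q_def)
  qed
  show ?case
  proof (cases \<beta>)
    case Nil
    then show ?thesis
      using Q by (auto simp: count_coarsenings_Nil coarsens_def Q_def)
  next
    case (Cons b \<beta>')
    have "count_list (coarsenings Q) \<beta>
        = (\<Sum>t\<in>{1..length Q}. if sum_list (take t Q) = b \<and> coarsens \<beta> Q then 1 else 0)"
      unfolding Cons count_coarsenings_Cons[OF Q(2)]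
      by (intro sum.cong refl) (auto simp: IH coarsens_Cons_iff[OF Q(1)])
    also have "\<dots> = (if coarsens \<beta> Q then 1 else 0)"
      unfolding Cons by (rule sum_first_part_indicator[OF Q(1)])
    finally show ?thesis
      unfolding Q_def .
  qed
qed

lemma partial_sums_map2_minus:
  "sorted_wrt (<) (x # xs) \<Longrightarrow> partial_sums (map2 (-) xs (x # xs)) = (\<lambda>z. z - x) ` set (x # xs)"
proof (induction xs arbitrary: x)
  case (Cons y ys)
  have "(+) (y - x) ` (\<lambda>z. z - y) ` set (y # ys) = (\<lambda>z. z - x) ` set (y # ys)"
    unfolding image_image using Cons.prems by (intro image_cong) auto
  then show ?case
    using Cons by (simp add: partial_sums_Cons)
qed (simp add: partial_sums_def)

lemma sum_list_map2_minus:
  "sorted_wrt (<) (x # xs) \<Longrightarrow> sum_list (map2 (-) xs (x # xs)) = last (x # xs) - (x :: nat)"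
proof (induction xs arbitrary: x)
  case (Cons y ys)
  have "last (y # ys) \<in> set (y # ys)"
    by (rule last_in_set) simp
  then have "y \<le> last (y # ys)"
    using Cons.prems by auto
  then show ?case
    using Cons by simp
qed simp

lemma zero_notin_map2_minus: "sorted_wrt (<) (x # xs) \<Longrightarrow> 0 \<notin> set (map2 (-) xs (x # xs :: nat list))"
  by (induction xs arbitrary: x) auto

lemma comp_eq_map2_minus:
  "comp n K = map2 (-) (sorted_list_of_set K @ [n]) (0 # sorted_list_of_set K @ [n])"
proof -
  have "zip (sorted_list_of_set K @ [n]) ((0 # sorted_list_of_set K) @ [n])
      = zip (sorted_list_of_set K @ [n]) (0 # sorted_list_of_set K)"
    by (subst zip_append2) simp
  then show ?thesis
    by (simp add: comp_def Let_def)
qed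

context
  fixes n :: nat and K :: "nat set"
  assumes K: "K \<subseteq> {1..n-1}" and n: "1 \<le> n"
begin

lemma sorted_comp_points: "sorted_wrt (<) (0 # sorted_list_of_set K @ [n])"
proof -
  have "0 < k \<and> k < n" if "k \<in> K" for k
    using n subsetD[OF K that] by auto
  then show ?thesis
    using finite_subset[OF K finite_atLeastAtMost] n by (simp add: sorted_wrt_append)
qed

lemma length_comp: "length (comp n K) = card K + 1"
  using finite_subset[OF K finite_atLeastAtMost] by (simp add: comp_eq_map2_minus)

lemma zero_notin_comp: "0 \<notin> set (comp n K)"
  unfolding comp_eq_map2_minus by (rule zero_notin_map2_minus[OF sorted_comp_points])

lemma sum_list_comp: "sum_list (comp n K) = n"
  unfolding comp_eq_map2_minus by (simp add: sum_list_map2_minus[OF sorted_comp_points])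

lemma partial_sums_comp: "partial_sums (comp n K) = insert 0 (insert n K)"
  unfolding comp_eq_map2_minus partial_sums_map2_minus[OF sorted_comp_points]
  using finite_subset[OF K finite_atLeastAtMost] by simp

end

lemma tildeS_subset: "tildeS n K \<subseteq> {1..n-1}"
  by (auto simp: tildeS_def)

lemma tildeS_tildeS: "Y \<subseteq> {1..n-1} \<Longrightarrow> tildeS n (tildeS n Y) = Y"
  unfolding tildeS_def by force

lemma subset_tildeS_iff:
  assumes "K \<subseteq> {1..n-1}" "T \<subseteq> {1..n-1}"
  shows "T \<subseteq> tildeS n K \<longleftrightarrow> tildeS n T \<subseteq> K"
  using assms unfolding tildeS_def by force

lemma image_minus_eq_tildeS:
  fixes n :: nat
  assumes "K \<subseteq> {1..n-1}"
  shows "(\<lambda>x. n - x) ` K = tildeS n K"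
proof (intro equalityI subsetI)
  fix i assume "i \<in> (\<lambda>x. n - x) ` K"
  then obtain k where k: "k \<in> K" "i = n - k"
    by blast
  moreover have "k \<in> {1..n-1}"
    using assms k by blast
  ultimately show "i \<in> tildeS n K"
    unfolding tildeS_def by auto
next
  fix i assume "i \<in> tildeS n K"
  then have "i = n - (n - i)" "n - i \<in> K"
    unfolding tildeS_def by auto
  then show "i \<in> (\<lambda>x. n - x) ` K"
    by (rule image_eqI)
qed

theorem qcoeff_antipode_comp:
  assumes K: "K \<subseteq> {1..n-1}" and R: "R \<subseteq> {1..n-1}" and n: "1 \<le> n"
  shows "qcoeff (antipode (comp n K)) (comp n R) = (-1)^(card K + 1) * (if R \<subseteq> tildeS n K then 1 else 0)"
proof -
  have "partial_sums (rev (comp n K)) = insert n (insert 0 (tildeS n K))"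
    using n image_minus_eq_tildeS[OF K]
    by (simp add: partial_sums_rev sum_list_comp[OF K n] partial_sums_comp[OF K n])
  moreover have "0 \<notin> R" "n \<notin> R"
    using R n by auto
  ultimately have "coarsens (comp n R) (rev (comp n K)) \<longleftrightarrow> R \<subseteq> tildeS n K"
    unfolding coarsens_def partial_sums_comp[OF R n]
    by (auto simp: zero_notin_comp[OF R n] sum_list_comp[OF R n] sum_list_comp[OF K n])
  then show ?thesis
    by (simp add: qcoeff_antipode count_coarsenings zero_notin_comp[OF K n] length_comp[OF K n])
qed

lemma sum_supersets_minus_one_power:
  fixes S :: "'a set"
  assumes "finite S" "A \<subseteq> S"
  shows "(\<Sum>K | A \<subseteq> K \<and> K \<subseteq> S. (-1::int) ^ card K) = (if A = S then (-1) ^ card S else 0)"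
proof (cases "A = S")
  case True
  then have "{K. A \<subseteq> K \<and> K \<subseteq> S} = {S}"
    by auto
  then show ?thesis
    using True by simp
next
  case False
  then have "A \<subset> S"
    using assms(2) by blast
  have "finite {K. A \<subseteq> K \<and> K \<subseteq> S}"
    using assms(1) by (auto intro: finite_subset[of _ "Pow S"])
  moreover have "card {K. K \<in> {K. A \<subseteq> K \<and> K \<subseteq> S} \<and> even (card K)}
      = card {K. K \<in> {K. A \<subseteq> K \<and> K \<subseteq> S} \<and> odd (card K)}"
    using card_subsupersets_even_odd[OF assms(1) \<open>A \<subset> S\<close>] by (simp add: conj_commute conj_left_commute)
  ultimately have "(\<Sum>K\<in>{K. A \<subseteq> K \<and> K \<subseteq> S}. (-1::int) ^ card K) = 0"
    by (rule sum_alternating_cancels)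
  then show ?thesis
    using False by simp
qed

text \<open>That is, \<open>S(F\<^sub>D) = (-1)\<^sup>n F\<^sub>E\<close> with \<open>E = tildeS n (setc n D)\<close>.\<close>
theorem Sq_Fcoef:
  assumes n: "1 \<le> n" and D: "D \<subseteq> {1..n-1}" and T: "T \<subseteq> {1..n-1}"
  shows "Sq n (Fcoef D) T = (-1)^n * (if setc n (tildeS n T) \<subseteq> D then 1 else 0)"
proof -
  define S where "S = {1..n-1}"
  define A where "A = D \<union> tildeS n T"
  have AS: "A \<subseteq> S"
    using D tildeS_subset unfolding A_def S_def by blast
  have "Sq n (Fcoef D) T = (\<Sum>K\<in>Pow S. if A \<subseteq> K then - ((-1::int) ^ card K) else 0)"
    unfolding Sq_def S_def[symmetric]
  proof (intro sum.cong refl)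
    fix K assume "K \<in> Pow S"
    then have "K \<subseteq> {1..n-1}"
      by (simp add: S_def)
    then show "Fcoef D K * qcoeff (antipode (comp n K)) (comp n T) = (if A \<subseteq> K then - ((-1) ^ card K) else 0)"
      using qcoeff_antipode_comp[OF _ T n] subset_tildeS_iff[OF _ T] by (simp add: Fcoef_def A_def)
  qed
  also have "\<dots> = - (\<Sum>K | A \<subseteq> K \<and> K \<subseteq> S. (-1::int) ^ card K)"
    by (simp add: sum.inter_filter[symmetric] sum_negf S_def Pow_def conj_commute)
  also have "\<dots> = - (if A = S then (-1) ^ (n - 1) else 0)"
    using sum_supersets_minus_one_power[OF _ AS] by (simp add: S_def)
  also have "\<dots> = (-1)^n * (if setc n (tildeS n T) \<subseteq> D then 1 else 0)"
  proof -
    have "(-1::int)^n = - ((-1)^(n-1))"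
      using n by (cases n) auto
    moreover have "A = S \<longleftrightarrow> setc n (tildeS n T) \<subseteq> D"
      using AS unfolding A_def S_def setc_def by auto
    ultimately show ?thesis
      by simp
  qed
  finally show ?thesis .
qed

section \<open>Standardization and the symmetry of c\<close>

lemma Des_subset: "Des n u \<subseteq> {1..n-1}"
  unfolding Des_def by auto

lemma card_filter_permutes:
  assumes "v permutes S" "finite S"
  shows "card {a \<in> S. P (v a)} = card {a \<in> S. P a}"
proof -
  have "card {a \<in> S. Q a} = (\<Sum>a\<in>S. if Q a then 1 else 0)" for Q
    using assms(2) by (simp add: sum.inter_filter[symmetric])
  then show ?thesis
    using sum.permute[OF assms(1), of "\<lambda>a. if P a then 1 else (0::nat)"] by (simp add: o_def)
qed

definition lex_less :: "(nat \<Rightarrow> nat) \<Rightarrow> nat \<Rightarrow> nat \<Rightarrow> bool" where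
  "lex_less w a b \<longleftrightarrow> w a < w b \<or> (w a = w b \<and> a < b)"

definition standardize :: "nat \<Rightarrow> (nat \<Rightarrow> nat) \<Rightarrow> nat \<Rightarrow> nat" where
  "standardize n w a = (if a \<in> {1..n} then card {b \<in> {1..n}. lex_less w b a} + 1 else a)"

lemma standardize_strict_mono:
  assumes "a \<in> {1..n}" "b \<in> {1..n}" "lex_less w a b"
  shows "standardize n w a < standardize n w b"
proof -
  have "{c \<in> {1..n}. lex_less w c a} \<subset> {c \<in> {1..n}. lex_less w c b}"
    using assms unfolding lex_less_def by auto
  then have "card {c \<in> {1..n}. lex_less w c a} < card {c \<in> {1..n}. lex_less w c b}"
    by (intro psubset_card_mono) auto
  then show ?thesis
    using assms unfolding standardize_def by simp
qed

lemma standardize_less_iff: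
  assumes "a \<in> {1..n}" "b \<in> {1..n}"
  shows "standardize n w a < standardize n w b \<longleftrightarrow> lex_less w a b"
proof
  assume less: "standardize n w a < standardize n w b"
  show "lex_less w a b"
  proof (rule ccontr)
    assume "\<not> lex_less w a b"
    then have "a = b \<or> lex_less w b a"
      unfolding lex_less_def by auto
    then show False
      using less standardize_strict_mono[OF assms(2,1), of w] by auto
  qed
qed (rule standardize_strict_mono[OF assms])

lemma standardize_in:
  assumes "a \<in> {1..n}"
  shows "standardize n w a \<in> {1..n}"
proof -
  have "card {b \<in> {1..n}. lex_less w b a} \<le> card ({1..n} - {a})"
    by (intro card_mono) (auto simp: lex_less_def)
  then show ?thesis
    using assms unfolding standardize_def by auto
qed

lemma standardize_permutes: "standardize n w permutes {1..n}"
proof (rule bij_imp_permutes)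
  have "inj_on (standardize n w) {1..n}"
  proof (intro inj_onI)
    fix a b assume ab: "a \<in> {1..n}" "b \<in> {1..n}" "standardize n w a = standardize n w b"
    then have "\<not> lex_less w a b" "\<not> lex_less w b a"
      using standardize_less_iff[OF ab(1,2), of w] standardize_less_iff[OF ab(2,1), of w] ab(3)
      by simp_all
    then show "a = b"
      unfolding lex_less_def by auto
  qed
  moreover have "standardize n w ` {1..n} \<subseteq> {1..n}"
    using standardize_in by blast
  ultimately show "bij_betw (standardize n w) {1..n} {1..n}"
    by (simp add: bij_betw_def endo_inj_surj)
qed (simp add: standardize_def del: atLeastAtMost_iff)

lemma standardize_cong:
  assumes "\<And>a. a \<in> {1..n} \<Longrightarrow> w a = w' a"
  shows "standardize n w = standardize n w'"
proof
  fix a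
  have "a \<in> {1..n} \<Longrightarrow> {b \<in> {1..n}. lex_less w b a} = {b \<in> {1..n}. lex_less w' b a}"
    using assms unfolding lex_less_def by auto
  then show "standardize n w a = standardize n w' a"
    unfolding standardize_def by simp
qed

lemma card_less_permutes:
  assumes "v permutes {1..n}" "a \<in> {1..n}"
  shows "card {b \<in> {1..n}. v b < v a} = v a - 1"
proof -
  have "v a \<in> {1..n}"
    using permutes_in_image[OF assms(1)] assms(2) by simp
  moreover have "card {b \<in> {1..n}. v b < v a} = card {c \<in> {1..n}. c < v a}"
    using card_filter_permutes[OF assms(1), of "\<lambda>c. c < v a"] by simp
  moreover have "{c \<in> {1..n}. c < v a} = {1..<v a}"
    using calculation(1) by auto
  ultimately show ?thesis
    by simp
qed

lemma standardize_unique: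
  assumes v: "v permutes {1..n}"
    and order: "\<And>a b. a \<in> {1..n} \<Longrightarrow> b \<in> {1..n} \<Longrightarrow> v a < v b \<longleftrightarrow> lex_less w a b"
  shows "v = standardize n w"
proof
  fix a show "v a = standardize n w a"
  proof (cases "a \<in> {1..n}")
    case True
    then have "{b \<in> {1..n}. v b < v a} = {b \<in> {1..n}. lex_less w b a}"
      using order by blast
    moreover have "v a \<in> {1..n}"
      using permutes_in_image[OF v] True by simp
    ultimately show ?thesis
      using card_less_permutes[OF v True] True unfolding standardize_def by simp
  next
    case False
    then show ?thesis
      using permutes_not_in[OF v] by (simp add: standardize_def del: atLeastAtMost_iff)
  qed
qed

definition block :: "nat set \<Rightarrow> nat \<Rightarrow> nat" where
  "block X p = card {x \<in> X. x < p}"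

lemma block_Suc: "block X (Suc p) = block X p + (if p \<in> X then 1 else 0)"
proof -
  have "{x \<in> X. x < Suc p} = (if p \<in> X then insert p {x \<in> X. x < p} else {x \<in> X. x < p})"
    by (auto simp: less_Suc_eq)
  then show ?thesis
    unfolding block_def by simp
qed

lemma block_mono: "p \<le> q \<Longrightarrow> block X p \<le> block X q"
  unfolding block_def by (rule card_mono) auto

lemma block_less_iff:
  assumes p: "p \<in> {1..n}"
  shows "block X p < i \<longleftrightarrow> p \<le> card {q \<in> {1..n}. block X q < i}"
proof
  assume "block X p < i"
  then have "{1..p} \<subseteq> {q \<in> {1..n}. block X q < i}"
    using p block_mono[of _ p X] by fastforce
  then have "card {1..p} \<le> card {q \<in> {1..n}. block X q < i}"
    by (intro card_mono) auto
  then show "p \<le> card {q \<in> {1..n}. block X q < i}"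
    by simp
next
  assume le: "p \<le> card {q \<in> {1..n}. block X q < i}"
  show "block X p < i"
  proof (rule ccontr)
    assume "\<not> block X p < i"
    have "q < p" if "block X q < i" for q
    proof (rule ccontr)
      assume "\<not> q < p"
      then have "block X p \<le> block X q"
        by (intro block_mono) simp
      then show False
        using that \<open>\<not> block X p < i\<close> by simp
    qed
    then have "{q \<in> {1..n}. block X q < i} \<subseteq> {1..<p}"
      by auto
    then have "card {q \<in> {1..n}. block X q < i} \<le> card {1..<p}"
      by (intro card_mono) auto
    then show False
      using le p by simp linarith
  qed
qed

definition same_content :: "nat \<Rightarrow> (nat \<Rightarrow> nat) \<Rightarrow> nat set \<Rightarrow> bool" where
  "same_content n w X \<longleftrightarrow> (\<forall>i. card {a \<in> {1..n}. w a = i} = card {p \<in> {1..n}. block X p = i})"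

lemma same_content_less:
  assumes "same_content n w X"
  shows "card {a \<in> {1..n}. w a < i} = card {p \<in> {1..n}. block X p < i}"
proof (induction i)
  case (Suc i)
  have "card {a \<in> {1..n}. f a < Suc i} = card {a \<in> {1..n}. f a < i} + card {a \<in> {1..n}. f a = i}"
    for f :: "nat \<Rightarrow> nat"
  proof -
    have "{a \<in> {1..n}. f a < Suc i} = {a \<in> {1..n}. f a < i} \<union> {a \<in> {1..n}. f a = i}"
      by auto
    then show ?thesis
      by (simp add: card_Un_disjoint disjoint_iff)
  qed
  then show ?case
    using Suc assms unfolding same_content_def by simp
qed simp

lemma same_content_permutes:
  assumes "v permutes {1..n}" "same_content n w X"
  shows "same_content n (w \<circ> v) X"
  using assms(2) card_filter_permutes[OF assms(1), of "\<lambda>c. w c = _"]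
  unfolding same_content_def by simp

lemma same_content_block_permutes:
  assumes "v permutes {1..n}"
  shows "same_content n (block X \<circ> v) X"
  using card_filter_permutes[OF assms, of "\<lambda>c. block X c = _"]
  unfolding same_content_def by simp

lemma block_standardize:
  assumes sc: "same_content n w X" and a: "a \<in> {1..n}"
  shows "block X (standardize n w a) = w a"
proof -
  define i where "i = w a"
  define L where "L = card {p \<in> {1..n}. block X p < i}"
  define E where "E = card {p \<in> {1..n}. block X p = i}"
  define s where "s = standardize n w a"
  have "{b \<in> {1..n}. lex_less w b a} = {b \<in> {1..n}. w b < i} \<union> {b \<in> {1..n}. w b = i \<and> b < a}"
    unfolding lex_less_def i_def by auto
  then have "s = card {b \<in> {1..n}. w b < i} + card {b \<in> {1..n}. w b = i \<and> b < a} + 1"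
    unfolding s_def standardize_def using a by (simp add: card_Un_disjoint disjoint_iff)
  moreover have "card {b \<in> {1..n}. w b = i \<and> b < a} < card {b \<in> {1..n}. w b = i}"
    using a by (intro psubset_card_mono) (auto simp: i_def)
  moreover have "card {b \<in> {1..n}. w b = i} = E"
    using sc unfolding E_def same_content_def by simp
  moreover have "card {b \<in> {1..n}. w b < i} = L"
    unfolding L_def by (rule same_content_less[OF sc])
  moreover have "card {p \<in> {1..n}. block X p < Suc i} = L + E"
  proof -
    have "{p \<in> {1..n}. block X p < Suc i} = {p \<in> {1..n}. block X p < i} \<union> {p \<in> {1..n}. block X p = i}"
      by auto
    then show ?thesis
      unfolding L_def E_def by (simp add: card_Un_disjoint disjoint_iff)
  qed
  moreover have "s \<in> {1..n}"
    unfolding s_def by (rule standardize_in[OF a])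
  ultimately have "block X s < Suc i" "\<not> block X s < i"
    using block_less_iff[of s n X "Suc i"] block_less_iff[of s n X i] unfolding L_def by simp_all
  then show ?thesis
    unfolding s_def i_def by simp
qed

lemma less_Suc_iff_notin_Des:
  assumes "u permutes {1..n}" "p \<in> {1..n-1}"
  shows "u p < u (Suc p) \<longleftrightarrow> p \<notin> Des n u"
proof -
  have "u p \<noteq> u (Suc p)"
    using permutes_inj[OF assms(1)] by (metis inj_eq n_not_Suc_n)
  then show ?thesis
    using assms(2) unfolding Des_def by auto
qed

lemma less_of_same_block:
  assumes u: "u permutes {1..n}" and D: "Des n u \<subseteq> X"
  shows "1 \<le> p \<Longrightarrow> p < q \<Longrightarrow> q \<le> n \<Longrightarrow> block X p = block X q \<Longrightarrow> u p < u q"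
proof (induction q)
  case (Suc q)
  have "block X p \<le> block X q"
    by (rule block_mono) (use Suc.prems in simp)
  moreover have "block X q \<le> block X (Suc q)"
    by (rule block_mono) simp
  ultimately have same: "block X p = block X q" "block X q = block X (Suc q)"
    using Suc.prems by simp_all
  have "q \<notin> X"
  proof
    assume "q \<in> X"
    then have "block X (Suc q) = Suc (block X q)"
      by (simp add: block_Suc)
    then show False
      using same(2) by linarith
  qed
  then have "u q < u (Suc q)"
    using less_Suc_iff_notin_Des[OF u, of q] D Suc.prems by auto
  moreover have "p < q \<Longrightarrow> u p < u q"
    using Suc.IH same(1) Suc.prems(1,3) by simp
  ultimately show ?case
    using Suc.prems by (cases "p = q") auto
qed simp

lemma lex_less_of_inv_less:
  assumes u: "u permutes {1..n}" and D: "Des n u \<subseteq> X"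
    and xy: "x \<in> {1..n}" "y \<in> {1..n}" "inv u x < inv u y"
  shows "lex_less (block X \<circ> inv u) x y"
proof (cases "block X (inv u x) = block X (inv u y)")
  case True
  have "inv u x \<in> {1..n}" "inv u y \<in> {1..n}"
    using permutes_in_image[OF permutes_inv[OF u]] xy by auto
  then have "u (inv u x) < u (inv u y)"
    using less_of_same_block[OF u D _ xy(3) _ True] by simp
  then show ?thesis
    using True by (simp add: lex_less_def permutes_inverses(1)[OF u])
next
  case False
  then show ?thesis
    using block_mono[of "inv u x" "inv u y" X] xy(3) by (simp add: lex_less_def)
qed

lemma inv_less_iff_lex_less:
  assumes u: "u permutes {1..n}" and D: "Des n u \<subseteq> X" and a: "a \<in> {1..n}" and b: "b \<in> {1..n}"
  shows "inv u a < inv u b \<longleftrightarrow> lex_less (block X \<circ> inv u) a b"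
proof
  assume lab: "lex_less (block X \<circ> inv u) a b"
  show "inv u a < inv u b"
  proof (rule ccontr)
    assume "\<not> inv u a < inv u b"
    moreover have "a \<noteq> b"
      using lab by (auto simp: lex_less_def)
    then have "inv u a \<noteq> inv u b"
      using permutes_inj[OF permutes_inv[OF u]] by (auto dest: injD)
    ultimately have "lex_less (block X \<circ> inv u) b a"
      by (intro lex_less_of_inv_less[OF u D b a]) simp
    then show False
      using lab unfolding lex_less_def by auto
  qed
qed (rule lex_less_of_inv_less[OF u D a b])

lemma inv_eq_standardize:
  assumes "u permutes {1..n}" "Des n u \<subseteq> X"
  shows "inv u = standardize n (block X \<circ> inv u)"
  by (rule standardize_unique[OF permutes_inv[OF assms(1)]]) (rule inv_less_iff_lex_less[OF assms])

lemma Des_inv_standardize: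
  assumes sc: "same_content n w X"
  shows "Des n (inv (standardize n w)) \<subseteq> X"
proof
  fix p assume "p \<in> Des n (inv (standardize n w))"
  then have p: "p \<in> {1..n-1}" and desc: "inv (standardize n w) (Suc p) < inv (standardize n w) p"
    unfolding Des_def by auto
  show "p \<in> X"
  proof (rule ccontr)
    assume "p \<notin> X"
    have s: "standardize n w permutes {1..n}"
      by (rule standardize_permutes)
    define a b where "a = inv (standardize n w) p" and "b = inv (standardize n w) (Suc p)"
    have ab: "a \<in> {1..n}" "b \<in> {1..n}"
      unfolding a_def b_def
      using p permutes_in_image[OF permutes_inv[OF s], of p] permutes_in_image[OF permutes_inv[OF s], of "Suc p"]
      by auto
    have sab: "standardize n w a = p" "standardize n w b = Suc p"
      unfolding a_def b_def by (simp_all add: permutes_inverses(1)[OF s])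
    have "w a = block X p" "w b = block X (Suc p)"
      using block_standardize[OF sc ab(1)] block_standardize[OF sc ab(2)] by (simp_all add: sab)
    then have "w a = w b"
      using block_Suc[of X p] \<open>p \<notin> X\<close> by simp
    moreover have "lex_less w a b"
      using standardize_less_iff[OF ab, of w] by (simp add: sab)
    ultimately have "a < b"
      unfolding lex_less_def by simp
    then show False
      using desc unfolding a_def b_def by simp
  qed
qed

lemma descent_in_Des_standardize:
  assumes "a \<in> {1..n-1}" "w (Suc a) < w a"
  shows "a \<in> Des n (standardize n w)"
  using assms standardize_less_iff[of "Suc a" n a w] unfolding Des_def lex_less_def by auto

lemma standardize_eq_imp_eq:
  assumes "same_content n w X" "same_content n w' X" "standardize n w = standardize n w'" "a \<in> {1..n}"
  shows "w a = w' a"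
  using block_standardize[OF assms(1,4)] block_standardize[OF assms(2,4)] assms(3) by simp

definition rev_perm :: "nat \<Rightarrow> nat \<Rightarrow> nat" where
  "rev_perm n a = (if a \<in> {1..n} then Suc n - a else a)"

lemma rev_perm_rev_perm [simp]: "rev_perm n (rev_perm n a) = a"
  unfolding rev_perm_def by auto

lemma rev_perm_permutes: "rev_perm n permutes {1..n}"
proof (rule bij_imp_permutes)
  show "bij_betw (rev_perm n) {1..n} {1..n}"
    by (rule bij_betwI[where g="rev_perm n"]) (auto simp: rev_perm_def)
qed (simp add: rev_perm_def del: atLeastAtMost_iff)

lemma rev_perm_involution: "rev_perm n \<circ> rev_perm n = id"
  by (simp add: fun_eq_iff)

lemma inv_rev_perm: "inv (rev_perm n) = rev_perm n"
  by (rule inv_unique_comp) (simp_all add: fun_eq_iff)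

definition rev_block_perm :: "nat \<Rightarrow> nat set \<Rightarrow> nat \<Rightarrow> nat" where
  "rev_block_perm n Y = standardize n (block Y \<circ> rev_perm n)"

lemma rev_block_perm_permutes: "rev_block_perm n Y permutes {1..n}"
  unfolding rev_block_perm_def by (rule standardize_permutes)

lemma rev_block_perm_Suc:
  assumes a: "a \<in> {1..n-1}" and nt: "a \<notin> tildeS n Y"
  shows "rev_block_perm n Y (Suc a) = Suc (rev_block_perm n Y a)"
    and "rev_block_perm n Y a \<in> {1..n-1}"
    and "rev_block_perm n Y a \<notin> Y"
proof -
  define h where "h = block Y \<circ> rev_perm n"
  have aN: "a \<in> {1..n}" and saN: "Suc a \<in> {1..n}"
    using a by auto
  have "n - a \<notin> Y"
    using a nt unfolding tildeS_def by auto
  moreover have "rev_perm n a = Suc (n - a)" "rev_perm n (Suc a) = n - a"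
    using a unfolding rev_perm_def by auto
  ultimately have hh: "h (Suc a) = h a"
    unfolding h_def using block_Suc[of Y "n - a"] by simp
  have "{b \<in> {1..n}. lex_less h b (Suc a)} = insert a {b \<in> {1..n}. lex_less h b a}"
    using aN hh unfolding lex_less_def by auto
  moreover have "a \<notin> {b \<in> {1..n}. lex_less h b a}"
    by (simp add: lex_less_def)
  ultimately show step: "rev_block_perm n Y (Suc a) = Suc (rev_block_perm n Y a)"
    unfolding rev_block_perm_def h_def[symmetric] standardize_def using aN saN by simp
  have sc: "same_content n h Y"
    unfolding h_def by (rule same_content_block_permutes[OF rev_perm_permutes])
  have "block Y (rev_block_perm n Y a) = block Y (rev_block_perm n Y (Suc a))"
    using block_standardize[OF sc aN] block_standardize[OF sc saN] hh
    unfolding rev_block_perm_def h_def[symmetric] by simp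
  then show "rev_block_perm n Y a \<notin> Y"
    using step block_Suc[of Y "rev_block_perm n Y a"] by (auto split: if_splits)
  show "rev_block_perm n Y a \<in> {1..n-1}"
    using standardize_in[OF aN, of h] standardize_in[OF saN, of h] step
    unfolding rev_block_perm_def h_def[symmetric] by auto
qed

definition des_perms :: "nat \<Rightarrow> nat set \<Rightarrow> nat set \<Rightarrow> (nat \<Rightarrow> nat) set" where
  "des_perms n J K = {u \<in> perms n. Des n u \<subseteq> J \<and> K \<subseteq> Des n (inv u)}"

lemma cnt_eq_card_des_perms: "cnt n J K = card (des_perms n J K)"
  unfolding cnt_def des_perms_def ..

lemma finite_perms: "finite (perms n)"
  unfolding perms_def by (rule finite_permutations) simp

lemma finite_des_perms: "finite (des_perms n J K)"
  using finite_perms unfolding des_perms_def by simp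

text \<open>A permutation \<open>u\<close> with \<open>Des n u \<subseteq> X\<close> is recovered from the word \<open>block X \<circ> inv u\<close>
  by standardization, and the descents of this word are those of \<open>inv u\<close>. Permuting its letters
  by \<open>rev_block_perm n Y\<close> moves the descents required on \<open>setc n Y\<close> to \<open>setc n (tildeS n Y)\<close>.\<close>
definition rearrange :: "nat \<Rightarrow> nat set \<Rightarrow> nat set \<Rightarrow> (nat \<Rightarrow> nat) \<Rightarrow> nat \<Rightarrow> nat" where
  "rearrange n X Y u = inv (standardize n (block X \<circ> inv u \<circ> rev_block_perm n Y))"

lemma same_content_rearranged_word:
  assumes "u permutes {1..n}"
  shows "same_content n (block X \<circ> inv u \<circ> rev_block_perm n Y) X"
  using same_content_permutes[OF rev_block_perm_permutes same_content_block_permutes[OF permutes_inv[OF assms]]]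
  by (simp add: comp_assoc)

lemma rearrange_in_des_perms:
  assumes "u \<in> des_perms n X (setc n Y)"
  shows "rearrange n X Y u \<in> des_perms n X (setc n (tildeS n Y))"
proof -
  have u: "u permutes {1..n}" and D: "Des n u \<subseteq> X" and A: "setc n Y \<subseteq> Des n (inv u)"
    using assms unfolding des_perms_def perms_def by auto
  define w where "w = block X \<circ> inv u \<circ> rev_block_perm n Y"
  define s where "s = standardize n w"
  have s: "s permutes {1..n}"
    unfolding s_def by (rule standardize_permutes)
  have "setc n (tildeS n Y) \<subseteq> Des n s"
  proof
    fix a assume "a \<in> setc n (tildeS n Y)"
    then have a: "a \<in> {1..n-1}" "a \<notin> tildeS n Y"
      unfolding setc_def by auto
    define c where "c = rev_block_perm n Y a"
    have c: "rev_block_perm n Y (Suc a) = Suc c" "c \<in> {1..n-1}" "c \<notin> Y"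
      using rev_block_perm_Suc[OF a] unfolding c_def by auto
    then have "inv u (Suc c) < inv u c"
      using A unfolding setc_def Des_def by auto
    then have "lex_less (block X \<circ> inv u) (Suc c) c"
      using inv_less_iff_lex_less[OF u D, of "Suc c" c] c(2) by auto
    then have "w (Suc a) < w a"
      unfolding w_def lex_less_def using c(1) c_def by auto
    then show "a \<in> Des n s"
      unfolding s_def by (rule descent_in_Des_standardize[OF a(1)])
  qed
  moreover have "Des n (inv s) \<subseteq> X"
    unfolding s_def w_def by (rule Des_inv_standardize[OF same_content_rearranged_word[OF u]])
  ultimately show ?thesis
    using permutes_inv[OF s] permutes_inv_inv[OF s]
    unfolding rearrange_def des_perms_def perms_def s_def w_def by simp
qed

lemma rearrange_inj_on: "inj_on (rearrange n X Y) (des_perms n X (setc n Y))"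
proof (rule inj_onI)
  fix u1 u2
  assume "u1 \<in> des_perms n X (setc n Y)" "u2 \<in> des_perms n X (setc n Y)"
    and eq: "rearrange n X Y u1 = rearrange n X Y u2"
  then have u1: "u1 permutes {1..n}" "Des n u1 \<subseteq> X" and u2: "u2 permutes {1..n}" "Des n u2 \<subseteq> X"
    unfolding des_perms_def perms_def by auto
  let ?w = "\<lambda>u. block X \<circ> inv u \<circ> rev_block_perm n Y"
  have "standardize n (?w u1) = standardize n (?w u2)"
    using eq permutes_inv_inv[OF standardize_permutes] unfolding rearrange_def by metis
  then have w: "?w u1 a = ?w u2 a" if "a \<in> {1..n}" for a
    using standardize_eq_imp_eq[OF same_content_rearranged_word[OF u1(1)] same_content_rearranged_word[OF u2(1)]] that
    by blast
  have "block X (inv u1 c) = block X (inv u2 c)" if "c \<in> {1..n}" for c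
  proof -
    define a where "a = inv (rev_block_perm n Y) c"
    have "a \<in> {1..n}" "rev_block_perm n Y a = c"
      using that permutes_in_image[OF permutes_inv[OF rev_block_perm_permutes[of n Y]], of c]
        permutes_inverses(1)[OF rev_block_perm_permutes[of n Y]]
      unfolding a_def by auto
    then show ?thesis
      using w[of a] by simp
  qed
  then have "inv u1 = inv u2"
    using inv_eq_standardize[OF u1] inv_eq_standardize[OF u2] standardize_cong[of n "block X \<circ> inv u1" "block X \<circ> inv u2"]
    by simp
  then show "u1 = u2"
    using permutes_inv_inv[OF u1(1)] permutes_inv_inv[OF u2(1)] by metis
qed

lemma cnt_setc_le_cnt_setc_tildeS: "cnt n X (setc n Y) \<le> cnt n X (setc n (tildeS n Y))"
  unfolding cnt_eq_card_des_perms
  by (rule card_inj_on_le[OF rearrange_inj_on _ finite_des_perms]) (use rearrange_in_des_perms in blast)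

lemma cnt_setc_tildeS: "Y \<subseteq> {1..n-1} \<Longrightarrow> cnt n X (setc n (tildeS n Y)) = cnt n X (setc n Y)"
  using cnt_setc_le_cnt_setc_tildeS[of n X Y] cnt_setc_le_cnt_setc_tildeS[of n X "tildeS n Y"]
  by (simp add: tildeS_tildeS)

lemma Des_comp_rev_perm:
  assumes f: "f permutes {1..n}"
  shows "Des n (f \<circ> rev_perm n) = tildeS n (setc n (Des n f))"
proof -
  have "f (rev_perm n (Suc p)) < f (rev_perm n p) \<longleftrightarrow> n - p \<notin> Des n f" if p: "p \<in> {1..n-1}" for p
  proof -
    have "rev_perm n (Suc p) = n - p" "rev_perm n p = Suc (n - p)" "n - p \<in> {1..n-1}"
      using p unfolding rev_perm_def by auto
    then show ?thesis
      using less_Suc_iff_notin_Des[OF f, of "n - p"] by simp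
  qed
  then show ?thesis
    unfolding Des_def[of n "f \<circ> rev_perm n"] tildeS_def setc_def by auto
qed

lemma Des_rev_perm_comp:
  assumes f: "f permutes {1..n}"
  shows "Des n (rev_perm n \<circ> f) = setc n (Des n f)"
proof -
  have "rev_perm n (f (Suc p)) < rev_perm n (f p) \<longleftrightarrow> p \<notin> Des n f" if p: "p \<in> {1..n-1}" for p
  proof -
    have "f p \<in> {1..n}" "f (Suc p) \<in> {1..n}"
      using p permutes_in_image[OF f, of p] permutes_in_image[OF f, of "Suc p"] by auto
    then have "rev_perm n (f (Suc p)) < rev_perm n (f p) \<longleftrightarrow> f p < f (Suc p)"
      unfolding rev_perm_def by auto
    then show ?thesis
      using less_Suc_iff_notin_Des[OF f p] by simp
  qed
  then show ?thesis
    unfolding Des_def[of n "rev_perm n \<circ> f"] setc_def by auto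
qed

lemma tildeS_setc_subset_iff: "tildeS n (setc n D) \<subseteq> R \<longleftrightarrow> setc n (tildeS n R) \<subseteq> D"
proof
  assume L: "tildeS n (setc n D) \<subseteq> R"
  show "setc n (tildeS n R) \<subseteq> D"
  proof
    fix i assume "i \<in> setc n (tildeS n R)"
    then have i: "i \<in> {1..n-1}" "n - i \<notin> R"
      unfolding setc_def tildeS_def by auto
    show "i \<in> D"
    proof (rule ccontr)
      assume "i \<notin> D"
      then have "n - i \<in> tildeS n (setc n D)"
        using i unfolding tildeS_def setc_def by auto
      then show False
        using L i by auto
    qed
  qed
next
  assume L: "setc n (tildeS n R) \<subseteq> D"
  show "tildeS n (setc n D) \<subseteq> R"
  proof
    fix p assume "p \<in> tildeS n (setc n D)"
    then have p: "p \<in> {1..n-1}" "n - p \<notin> D"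
      unfolding setc_def tildeS_def by auto
    show "p \<in> R"
    proof (rule ccontr)
      assume "p \<notin> R"
      then have "n - p \<in> setc n (tildeS n R)"
        using p unfolding tildeS_def setc_def by auto
      then show False
        using L p by auto
    qed
  qed
qed

lemma inv_comp_rev_perm:
  assumes u: "u permutes {1..n}"
  shows "inv (inv u \<circ> rev_perm n) = rev_perm n \<circ> u"
    and "inv (rev_perm n \<circ> inv u) = u \<circ> rev_perm n"
  using o_inv_distrib[OF permutes_bij[OF permutes_inv[OF u]] permutes_bij[OF rev_perm_permutes]]
    o_inv_distrib[OF permutes_bij[OF rev_perm_permutes] permutes_bij[OF permutes_inv[OF u]]]
  by (simp_all add: inv_rev_perm permutes_inv_inv[OF u])

lemma cnt_transpose: "cnt n J (setc n (tildeS n R)) = cnt n R (setc n J)"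
proof -
  have mem_iff: "inv u \<circ> rev_perm n \<in> des_perms n R (setc n J) \<longleftrightarrow> u \<in> des_perms n J (setc n (tildeS n R))"
    if u: "u permutes {1..n}" for u
  proof -
    have "setc n J \<subseteq> setc n (Des n u) \<longleftrightarrow> Des n u \<subseteq> J"
      using Des_subset[of n u] unfolding setc_def by blast
    then show ?thesis
      using u permutes_inv[OF u] rev_perm_permutes[of n]
      by (simp add: des_perms_def perms_def permutes_compose inv_comp_rev_perm Des_comp_rev_perm
                    Des_rev_perm_comp tildeS_setc_subset_iff conj_commute)
  qed
  have "bij_betw (\<lambda>u. inv u \<circ> rev_perm n) (des_perms n J (setc n (tildeS n R))) (des_perms n R (setc n J))"
  proof (rule bij_betwI[where g="\<lambda>v. rev_perm n \<circ> inv v"])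
    show "(\<lambda>u. inv u \<circ> rev_perm n) \<in> des_perms n J (setc n (tildeS n R)) \<rightarrow> des_perms n R (setc n J)"
      using mem_iff by (auto simp: des_perms_def perms_def)
    show "(\<lambda>v. rev_perm n \<circ> inv v) \<in> des_perms n R (setc n J) \<rightarrow> des_perms n J (setc n (tildeS n R))"
    proof
      fix v assume v: "v \<in> des_perms n R (setc n J)"
      then have vp: "v permutes {1..n}"
        by (simp add: des_perms_def perms_def)
      have "rev_perm n \<circ> inv v permutes {1..n}"
        by (rule permutes_compose[OF permutes_inv[OF vp] rev_perm_permutes])
      then show "rev_perm n \<circ> inv v \<in> des_perms n J (setc n (tildeS n R))"
        using mem_iff[of "rev_perm n \<circ> inv v"] v
        by (simp add: inv_comp_rev_perm[OF vp] comp_assoc rev_perm_involution)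
    qed
  qed (auto simp: des_perms_def perms_def inv_comp_rev_perm comp_assoc rev_perm_involution)
  then show ?thesis
    unfolding cnt_eq_card_des_perms by (rule bij_betw_same_card)
qed

theorem cnt_symmetric:
  assumes "J \<subseteq> {1..n-1}"
  shows "cnt n J (setc n (tildeS n R)) = cnt n R (setc n (tildeS n J))"
  using cnt_transpose[of n J R] cnt_setc_tildeS[OF assms, of R] by simp

section \<open>The map \<open>\<Phi>\<close>\<close>

lemma Theta_apply: "v \<in> perms n \<Longrightarrow> Theta n z v = z (inv v)"
proof -
  assume v: "v \<in> perms n"
  have "inv u = v \<longleftrightarrow> u = inv v" if "u \<in> perms n" for u
  proof -
    have "inv (inv u) = u" "inv (inv v) = v"
      using that v unfolding perms_def by (simp_all add: permutes_inv_inv)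
    then show ?thesis
      by metis
  qed
  then have "Theta n z v = (\<Sum>u\<in>perms n. if u = inv v then z u else 0)"
    unfolding Theta_def by (intro sum.cong) auto
  also have "\<dots> = z (inv v)"
    using v finite_perms by (simp add: perms_def permutes_inv)
  finally show ?thesis .
qed

lemma Phi_apply:
  "Phi n g R = (\<Sum>v\<in>perms n. (\<Sum>K\<in>Pow {1..n-1}. g K * Fcoef (Des n (inv v)) K) * Fcoef (Des n v) R)"
  unfolding Phi_def Dmap_def o_apply
  by (intro sum.cong) (simp_all add: Theta_apply Dstar_def)

lemma sum_Mstar:
  assumes "J \<in> A" "finite A"
  shows "(\<Sum>K\<in>A. Mstar J K * f K) = f J"
proof -
  have "(\<Sum>K\<in>A. Mstar J K * f K) = (\<Sum>K\<in>A. if K = J then f K else 0)"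
    by (intro sum.cong) (auto simp: Mstar_def)
  then show ?thesis
    using assms by simp
qed

lemma Sq_sum:
  assumes "finite V"
  shows "Sq n (\<lambda>K. \<Sum>v\<in>V. a v * f v K) R = (\<Sum>v\<in>V. a v * Sq n (f v) R)"
  unfolding Sq_def sum_distrib_right sum_distrib_left mult.assoc
  by (rule sum.swap)

lemma sum_perms_indicator:
  "(\<Sum>v\<in>perms n. if P v then 1 else 0) = int (card {v \<in> perms n. P v})"
  using finite_perms by (simp add: sum.inter_filter[symmetric])

lemma sum_perms_inv: "(\<Sum>v\<in>perms n. f (inv v) v) = (\<Sum>u\<in>perms n. f u (inv u))"
  by (rule sum.reindex_bij_witness[where i=inv and j=inv])
     (auto simp: perms_def permutes_inv permutes_inv_inv)

theorem Sq_Phi_Mstar: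
  assumes n: "1 \<le> n" and J: "J \<subseteq> {1..n-1}" and R: "R \<subseteq> {1..n-1}"
  shows "Sq n (Phi n (Mstar J)) R = (-1) ^ n * int (cnt n J (setc n (tildeS n R)))"
proof -
  have "Phi n (Mstar J) = (\<lambda>K. \<Sum>v\<in>perms n. Fcoef (Des n (inv v)) J * Fcoef (Des n v) K)"
    using J by (intro ext) (simp add: Phi_apply sum_Mstar)
  then have "Sq n (Phi n (Mstar J)) R = (\<Sum>v\<in>perms n. Fcoef (Des n (inv v)) J * Sq n (Fcoef (Des n v)) R)"
    by (simp add: Sq_sum finite_perms)
  also have "\<dots> = (-1) ^ n * (\<Sum>v\<in>perms n. if Des n (inv v) \<subseteq> J \<and> setc n (tildeS n R) \<subseteq> Des n v then 1 else 0)"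
    unfolding sum_distrib_left by (intro sum.cong) (auto simp: Sq_Fcoef[OF n Des_subset R] Fcoef_def)
  also have "(\<Sum>v\<in>perms n. if Des n (inv v) \<subseteq> J \<and> setc n (tildeS n R) \<subseteq> Des n v then 1 else 0)
      = (\<Sum>u\<in>perms n. if Des n u \<subseteq> J \<and> setc n (tildeS n R) \<subseteq> Des n (inv u) then (1::int) else 0)"
    by (rule sum_perms_inv[where f="\<lambda>u v. if Des n u \<subseteq> J \<and> setc n (tildeS n R) \<subseteq> Des n v then 1 else 0"])
  also have "\<dots> = int (cnt n J (setc n (tildeS n R)))"
    unfolding sum_perms_indicator cnt_def ..
  finally show ?thesis .
qed

theorem Phi_Sstar_Mstar:
  assumes n: "1 \<le> n" and J: "J \<subseteq> {1..n-1}"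
  shows "Phi n (Sstar n (Mstar J)) R = (-1) ^ n * int (cnt n R (setc n (tildeS n J)))"
proof -
  have "(\<Sum>K\<in>Pow {1..n-1}. Sstar n (Mstar J) K * Fcoef D K) = Sq n (Fcoef D) J" for D
    unfolding Sq_def Sstar_def using J by (simp add: sum_Mstar mult.commute)
  then have "Phi n (Sstar n (Mstar J)) R
      = (\<Sum>v\<in>perms n. Sq n (Fcoef (Des n (inv v))) J * Fcoef (Des n v) R)"
    by (simp add: Phi_apply)
  also have "\<dots> = (-1) ^ n * (\<Sum>v\<in>perms n. if Des n v \<subseteq> R \<and> setc n (tildeS n J) \<subseteq> Des n (inv v) then 1 else 0)"
    unfolding sum_distrib_left by (intro sum.cong) (auto simp: Sq_Fcoef[OF n Des_subset J] Fcoef_def)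
  also have "\<dots> = (-1) ^ n * int (cnt n R (setc n (tildeS n J)))"
    unfolding sum_perms_indicator cnt_def ..
  finally show ?thesis .
qed

theorem mainTheorem19:
  fixes n :: nat and J R :: "nat set"
  assumes "n \<ge> 1" and "J \<subseteq> {1..n-1}" and "R \<subseteq> {1..n-1}"
  shows "cnt n J (setc n (tildeS n R)) = cnt n R (setc n (tildeS n J))
       \<and> Sq n (Phi n (Mstar J)) R = (-1) ^ n * int (cnt n J (setc n (tildeS n R)))
       \<and> Phi n (Sstar n (Mstar J)) R = (-1) ^ n * int (cnt n J (setc n (tildeS n R)))"
  using cnt_symmetric[OF assms(2), of R] Sq_Phi_Mstar[OF assms] Phi_Sstar_Mstar[OF assms(1,2)] by simp

end
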